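(* Assume (A.a). Let $\beta\in[0,1)$, $\lambda\in[0,\frac{\beta}{1-\beta}]$, and step sizes $\alpha_k\in\big(0,\frac{1-\beta}{\sqrt8\,Lm}\big]$ for all $k$, and let the sequences be generated by RRM. Let $\mathcal B:=1-\frac{1-\beta}{\beta}\lambda$ if $\beta>0$ and $\mathcal B:=1$ if $\beta=0$ (so $\mathcal B\in[0,1]$). (a) For all $k\ge1$ (arbitrary permutations), \[ \sum_{t=1}^m\|\hat y_t^k-z^k\|^2\le\frac{5m}{4}\Big[\mathcal B\|z^k-x^k\|^2+\frac{m^2\alpha_k^2}{(1-\beta)^2}\|\nabla f(z^k)\|^2+\frac{3Lm^2\alpha_k^2}{(1-\beta)^2}[f(z^k)-\bar f]\Big]. \] (b) If in addition (A.c) holds, then for all $k\ge1$, \[ \sum_{t=1}^m\mathbb E_k[\|\hat y_t^k-z^k\|^2]\le\frac{5m}{4}\Big[\mathcal B\|z^k-x^k\|^2+\frac{m^2\alpha_k^2}{(1-\beta)^2}\|\nabla f(z^k)\|^2+\frac{3Lm\alpha_k^2}{b(1-\beta)^2}[f(z^k)-\bar f]\Big]. \]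
   Context: Let $n,d\in\mathbb N$, $f_1,\dots,f_n:\mathbb R^d\to\mathbb R$ continuously differentiable, $f:=\frac1n\sum_{i=1}^n f_i$, $[n]:=\{1,\dots,n\}$. Fix a mini-batch size $b\in\mathbb N$ with $m:=n/b\in\mathbb N$. Random reshuffling with momentum (RRM) with step sizes $\{\alpha_k\}_{k\ge1}\subset(0,\infty)$ and parameters $\beta,\lambda$ generates sequences as follows: start with $x^1=\tilde x^1\in\mathbb R^d$; for each $k=1,2,\dots$ choose a permutation $\pi^k=(\pi^k_1,\dots,\pi^k_n)$ of $[n]$, set $y_0^k=\tilde x^k$, $y_1^k=x^k$, and for $i=1,\dots,m$ compute $\hat y_i^k=y_i^k+\lambda(y_i^k-y_{i-1}^k)$, $d_i^k=\frac1b\sum_{j=(i-1)b+1}^{ib}\nabla f_{\pi^k_j}(\hat y_i^k)$, $y_{i+1}^k=y_i^k-\alpha_kd_i^k+\beta(y_i^k-y_{i-1}^k)$; then set $\tilde x^{k+1}=y_m^k$, $x^{k+1}=y_{m+1}^k$. The proxy iterates are $z^k:=\frac{1}{1-\beta}x^k-\frac{\beta}{1-\beta}\tilde x^k$. Assumption (A.a): there are $L>0$ and $\bar f\in\mathbb R$ such that each $\nabla f_i$ is $L$-Lipschitz and $f_i(x)\ge\bar f$ for all $x\in\mathbb R^d$, $i\in[n]$. Assumption (A.c): the permutations $\pi^1,\pi^2,\dots$ are independent and each is uniformly distributed over all permutations of $[n]$. $\mathbb E_k[\cdot]$ denotes conditional expectation given $\pi^1,\dots,\pi^{k-1}$ (so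 $x^k,\tilde x^k,z^k$ are fixed and only $\pi^k$ is random). *)

theory Defs
  imports "HOL-Analysis.Analysis" "HOL-Probability.Probability"
begin

text \<open>Inner loop of RRM in epoch k, with step size al, momentum beta,
  extrapolation lam, permutation p of {1..n}, mini-batch size b, gradients g.
  rrm_inner ... xt x i = (y_i, y_(i+1)), where y_0 = xt (= x-tilde^k), y_1 = x (= x^k).\<close>
primrec rrm_inner ::
  "(nat \<Rightarrow> 'a::real_inner \<Rightarrow> 'a) \<Rightarrow> nat \<Rightarrow> real \<Rightarrow> real \<Rightarrow> real \<Rightarrow> (nat \<Rightarrow> nat)
    \<Rightarrow> 'a \<Rightarrow> 'a \<Rightarrow> nat \<Rightarrow> 'a \<times> 'a" where
  "rrm_inner g b al beta lam p xt x 0 = (xt, x)"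
| "rrm_inner g b al beta lam p xt x (Suc i) =
     (let u = fst (rrm_inner g b al beta lam p xt x i);
          v = snd (rrm_inner g b al beta lam p xt x i);
          yh = v + lam *\<^sub>R (v - u);
          d = (1 / real b) *\<^sub>R (\<Sum>j = i * b + 1 .. Suc i * b. g (p j) yh)
      in (v, v - al *\<^sub>R d + beta *\<^sub>R (v - u)))"

definition rrm_yhat ::
  "(nat \<Rightarrow> 'a::real_inner \<Rightarrow> 'a) \<Rightarrow> nat \<Rightarrow> real \<Rightarrow> real \<Rightarrow> real \<Rightarrow> (nat \<Rightarrow> nat)
    \<Rightarrow> 'a \<Rightarrow> 'a \<Rightarrow> nat \<Rightarrow> 'a" where
  "rrm_yhat g b al beta lam p xt x t =
     (let u = fst (rrm_inner g b al beta lam p xt x (t - 1));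
          v = snd (rrm_inner g b al beta lam p xt x (t - 1))
      in v + lam *\<^sub>R (v - u))"

text \<open>Outer loop: rrm_state ... k = (x-tilde^k, x^k) for k \<ge> 1 (index 0 is a dummy copy
  of epoch 1). al k is the step size and ps k the permutation of epoch k.\<close>
fun rrm_state ::
  "(nat \<Rightarrow> 'a::real_inner \<Rightarrow> 'a) \<Rightarrow> nat \<Rightarrow> nat \<Rightarrow> (nat \<Rightarrow> real) \<Rightarrow> real \<Rightarrow> real
    \<Rightarrow> (nat \<Rightarrow> nat \<Rightarrow> nat) \<Rightarrow> 'a \<Rightarrow> nat \<Rightarrow> 'a \<times> 'a" where
  "rrm_state g b m al beta lam ps x1 0 = (x1, x1)"
| "rrm_state g b m al beta lam ps x1 (Suc 0) = (x1, x1)"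
| "rrm_state g b m al beta lam ps x1 (Suc (Suc k)) =
     rrm_inner g b (al (Suc k)) beta lam (ps (Suc k))
       (fst (rrm_state g b m al beta lam ps x1 (Suc k)))
       (snd (rrm_state g b m al beta lam ps x1 (Suc k))) m"

definition rrm_z :: "real \<Rightarrow> 'a::real_vector \<Rightarrow> 'a \<Rightarrow> 'a" where
  "rrm_z beta xt x = (1 / (1 - beta)) *\<^sub>R x - (beta / (1 - beta)) *\<^sub>R xt"

definition rrm_B :: "real \<Rightarrow> real \<Rightarrow> real" where
  "rrm_B beta lam = (if beta > 0 then 1 - (1 - beta) / beta * lam else 1)"

end

theory Submission
  imports Defs
begin

text \<open>Write \<open>\<tau> = \<alpha> / (1 - \<beta>)\<close> and \<open>z\<close> for the proxy point at the start of an epoch. The proxy point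
  moves by \<open>-\<tau> d\<close> in every inner step, so the extrapolated points of the epoch expand as
  \<open>yhat(i+1) - z = B \<beta>^i (x - z) - \<tau> \<Sum>j<i. (1 - B \<beta>^(i-j)) d(j+1)\<close>.
  Each mini-batch direction \<open>d(j+1)\<close> is \<open>\<nabla>f(z)\<close>, plus the sampling error of the shuffled component
  gradients at \<open>z\<close>, plus a Lipschitz error of size at most \<open>L \<parallel>yhat(j+1) - z\<parallel>\<close>. Squaring with a
  convexity argument and summing over the epoch, the Lipschitz errors are absorbed thanks to
  \<open>\<tau>\<^sup>2 m\<^sup>2 L\<^sup>2 \<le> 1/8\<close>. The sampling errors are weighted sums of the centred gradients
  \<open>\<nabla>f\<^sub>\<pi>\<^sub>(\<^sub>l\<^sub>)(z) - \<nabla>f(z)\<close>: Cauchy-Schwarz bounds them for every permutation, and for a uniformly random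
  permutation sampling without replacement is negatively correlated, which saves a factor \<open>1/n\<close>.
  Finally \<open>\<parallel>\<nabla>f\<^sub>i(z)\<parallel>\<^sup>2 \<le> 2L (f\<^sub>i(z) - fbar)\<close> turns gradient norms into function gaps.\<close>

section \<open>Smooth components\<close>

lemma lipschitz_gradient_quadratic_bound:
  fixes F :: "'a::real_inner \<Rightarrow> real" and G :: "'a \<Rightarrow> 'a"
  assumes der: "\<And>y. (F has_derivative (\<lambda>h. G y \<bullet> h)) (at y)"
    and lip: "\<And>y w. norm (G y - G w) \<le> L * norm (y - w)"
  shows "F (y + h) \<le> F y + G y \<bullet> h + L / 2 * (norm h)\<^sup>2"
proof -
  define \<phi> where "\<phi> t = F (y + t *\<^sub>R h) - t * (G y \<bullet> h) - L / 2 * t\<^sup>2 * (norm h)\<^sup>2" for t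
  have \<phi>_deriv: "(\<phi> has_real_derivative (G (y + t *\<^sub>R h) \<bullet> h - G y \<bullet> h - L * t * (norm h)\<^sup>2)) (at t)"
    for t
  proof -
    have "((\<lambda>t. F (y + t *\<^sub>R h)) has_derivative (\<lambda>s. G (y + t *\<^sub>R h) \<bullet> (s *\<^sub>R h))) (at t)"
      by (rule has_derivative_compose[OF _ der]) (auto intro!: derivative_eq_intros)
    then have "((\<lambda>t. F (y + t *\<^sub>R h)) has_real_derivative (G (y + t *\<^sub>R h) \<bullet> h)) (at t)"
      by (simp add: has_field_derivative_def mult.commute[of _ "G (y + t *\<^sub>R h) \<bullet> h"])
    then show ?thesis
      unfolding \<phi>_def by (auto intro!: derivative_eq_intros)
  qed
  have "\<phi> 1 \<le> \<phi> 0"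
  proof (rule DERIV_nonpos_imp_nonincreasing[of 0 1])
    fix t :: real
    assume t: "0 \<le> t" "t \<le> 1"
    have "G (y + t *\<^sub>R h) \<bullet> h - G y \<bullet> h \<le> norm (G (y + t *\<^sub>R h) - G y) * norm h"
      by (metis inner_diff_left norm_cauchy_schwarz)
    also have "\<dots> \<le> L * t * (norm h)\<^sup>2"
      using lip[of "y + t *\<^sub>R h" y] t
      by (auto simp: power2_eq_square intro: order_trans[OF mult_right_mono])
    finally show "\<exists>d. (\<phi> has_real_derivative d) (at t) \<and> d \<le> 0"
      using \<phi>_deriv by fastforce
  qed simp
  then show ?thesis
    unfolding \<phi>_def by simp
qed

lemma norm_gradient_sq_le_gap:
  fixes F :: "'a::real_inner \<Rightarrow> real" and G :: "'a \<Rightarrow> 'a"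
  assumes der: "\<And>y. (F has_derivative (\<lambda>h. G y \<bullet> h)) (at y)"
    and lip: "\<And>y w. norm (G y - G w) \<le> L * norm (y - w)"
    and lower: "\<And>y. fbar \<le> F y" and "0 < L"
  shows "(norm (G y))\<^sup>2 \<le> 2 * L * (F y - fbar)"
proof -
  have "fbar \<le> F (y + (- (1 / L)) *\<^sub>R G y)"
    by (rule lower)
  also have "\<dots> \<le> F y + G y \<bullet> ((- (1 / L)) *\<^sub>R G y) + L / 2 * (norm ((- (1 / L)) *\<^sub>R G y))\<^sup>2"
    by (rule lipschitz_gradient_quadratic_bound[OF der lip])
  also have "\<dots> = F y - (norm (G y))\<^sup>2 / (2 * L)"
    using \<open>0 < L\<close>
    by (simp add: power_mult_distrib field_simps power2_eq_square flip: power2_norm_eq_inner)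
  finally show ?thesis
    using \<open>0 < L\<close> by (simp add: field_simps)
qed

lemma sum_norm_sq_deviation_le:
  fixes v :: "'b \<Rightarrow> 'a::real_inner"
  shows "(\<Sum>k\<in>K. (norm (v k - (1 / real (card K)) *\<^sub>R (\<Sum>i\<in>K. v i)))\<^sup>2) \<le> (\<Sum>k\<in>K. (norm (v k))\<^sup>2)"
proof (cases "finite K \<and> K \<noteq> {}")
  case True
  define c where "c = (1 / real (card K)) *\<^sub>R (\<Sum>i\<in>K. v i)"
  have sum_v: "(\<Sum>k\<in>K. v k) = real (card K) *\<^sub>R c"
    using True by (simp add: c_def)
  have "(\<Sum>k\<in>K. (norm (v k - c))\<^sup>2) = (\<Sum>k\<in>K. (norm (v k))\<^sup>2 - 2 * (v k \<bullet> c) + (norm c)\<^sup>2)"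
    by (rule sum.cong) (simp_all add: power2_norm_eq_inner inner_diff_left inner_diff_right inner_commute)
  also have "\<dots> = (\<Sum>k\<in>K. (norm (v k))\<^sup>2) - 2 * ((\<Sum>k\<in>K. v k) \<bullet> c) + real (card K) * (norm c)\<^sup>2"
    by (simp add: sum.distrib sum_subtractf sum_distrib_left inner_sum_left)
  also have "\<dots> = (\<Sum>k\<in>K. (norm (v k))\<^sup>2) - real (card K) * (norm c)\<^sup>2"
    unfolding sum_v by (simp add: power2_norm_eq_inner)
  finally show ?thesis
    unfolding c_def[symmetric] by simp
qed auto

lemma sum_norm_sq_gradient_deviation_le_gap:
  fixes fs :: "nat \<Rightarrow> 'a::real_inner \<Rightarrow> real" and g :: "nat \<Rightarrow> 'a \<Rightarrow> 'a" and y :: 'a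
  assumes "0 < n"
    and deriv: "\<And>i y. i \<in> {1..n} \<Longrightarrow> (fs i has_derivative (\<lambda>h. g i y \<bullet> h)) (at y)"
    and lip: "\<And>i y w. i \<in> {1..n} \<Longrightarrow> norm (g i y - g i w) \<le> L * norm (y - w)"
    and lower: "\<And>i y. i \<in> {1..n} \<Longrightarrow> fbar \<le> fs i y" and "0 < L"
  defines "gap \<equiv> (1 / real n) * (\<Sum>i = 1..n. fs i y) - fbar"
  shows "(\<Sum>k = 1..n. (norm (g k y - (1 / real n) *\<^sub>R (\<Sum>i = 1..n. g i y)))\<^sup>2) \<le> 2 * L * real n * gap"
    and "0 \<le> gap"
proof -
  have gap_sum: "real n * gap = (\<Sum>i = 1..n. fs i y - fbar)"
    unfolding gap_def using \<open>0 < n\<close> by (simp add: sum_subtractf right_diff_distrib)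
  have "(\<Sum>k = 1..n. (norm (g k y - (1 / real n) *\<^sub>R (\<Sum>i = 1..n. g i y)))\<^sup>2) \<le> (\<Sum>k = 1..n. (norm (g k y))\<^sup>2)"
    using sum_norm_sq_deviation_le[of "\<lambda>k. g k y" "{1..n}"] by simp
  also have "\<dots> \<le> (\<Sum>i = 1..n. 2 * L * (fs i y - fbar))"
    by (intro sum_mono norm_gradient_sq_le_gap[OF deriv lip lower \<open>0 < L\<close>]) auto
  finally show "(\<Sum>k = 1..n. (norm (g k y - (1 / real n) *\<^sub>R (\<Sum>i = 1..n. g i y)))\<^sup>2) \<le> 2 * L * real n * gap"
    unfolding mult.assoc gap_sum by (simp add: sum_distrib_left)
  have "0 \<le> real n * gap"
    unfolding gap_sum using lower by (intro sum_nonneg) auto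
  then show "0 \<le> gap"
    using \<open>0 < n\<close> by (simp add: zero_le_mult_iff)
qed

section \<open>The proxy sequence\<close>

lemma rrm_z_heavy_ball_step:
  fixes u v d :: "'a::real_vector"
  assumes "beta \<noteq> 1"
  shows "rrm_z beta v (v - al *\<^sub>R d + beta *\<^sub>R (v - u)) = rrm_z beta u v - (al / (1 - beta)) *\<^sub>R d"
proof -
  have "(1 - beta) *\<^sub>R rrm_z beta v (v - al *\<^sub>R d + beta *\<^sub>R (v - u))
      = (1 - beta) *\<^sub>R (rrm_z beta u v - (al / (1 - beta)) *\<^sub>R d)"
    using assms unfolding rrm_z_def by (simp add: algebra_simps)
  then show ?thesis
    using assms by simp
qed

lemma minus_rrm_z:
  fixes u v :: "'a::real_vector"
  assumes "beta \<noteq> 1"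
  shows "v - rrm_z beta u v = (- (beta / (1 - beta))) *\<^sub>R (v - u)"
proof (rule scaleR_left_imp_eq)
  show "1 - beta \<noteq> 0"
    using assms by simp
  have "(beta - beta * beta) / (1 - beta) = beta"
    using assms by (auto simp: field_simps)
  then show "(1 - beta) *\<^sub>R (v - rrm_z beta u v) = (1 - beta) *\<^sub>R ((- (beta / (1 - beta))) *\<^sub>R (v - u))"
    using assms unfolding rrm_z_def by (simp add: algebra_simps)
qed

lemma rrm_heavy_ball_step_minus_z:
  fixes u v d :: "'a::real_vector"
  assumes "beta \<noteq> 1"
  shows "(v - al *\<^sub>R d + beta *\<^sub>R (v - u)) - rrm_z beta v (v - al *\<^sub>R d + beta *\<^sub>R (v - u))
      = beta *\<^sub>R (v - rrm_z beta u v) + (beta * (al / (1 - beta))) *\<^sub>R d"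
proof -
  have "(beta - 1) * beta / (1 - beta) = - beta" "beta * (al / (1 - beta)) = al / (1 - beta) - al"
    using assms by (simp_all add: field_simps)
  then have "beta *\<^sub>R (v - u) = (beta - 1) *\<^sub>R (v - rrm_z beta u v)"
    and coeff: "(beta * (al / (1 - beta))) *\<^sub>R d = (al / (1 - beta)) *\<^sub>R d - al *\<^sub>R d"
    using assms by (simp_all add: minus_rrm_z scaleR_diff_left)
  then show ?thesis
    unfolding rrm_z_heavy_ball_step[OF assms] coeff by (simp add: algebra_simps)
qed

lemma rrm_B_bounds:
  assumes "0 \<le> beta" "beta < 1" "0 \<le> lam" "lam \<le> beta / (1 - beta)"
  shows "0 \<le> rrm_B beta lam" "rrm_B beta lam \<le> 1"
proof -
  show "rrm_B beta lam \<le> 1"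
    using assms by (auto simp: rrm_B_def)
  show "0 \<le> rrm_B beta lam"
  proof (cases "beta > 0")
    case True
    have "(1 - beta) / beta * lam \<le> (1 - beta) / beta * (beta / (1 - beta))"
      using assms True by (intro mult_left_mono) auto
    then show ?thesis
      using assms True by (simp add: rrm_B_def)
  qed (simp add: rrm_B_def)
qed

lemma extrapolation_minus_rrm_z:
  fixes u v :: "'a::real_vector"
  assumes "0 \<le> beta" "beta < 1" "0 \<le> lam" "lam \<le> beta / (1 - beta)"
  shows "v + lam *\<^sub>R (v - u) - rrm_z beta u v = rrm_B beta lam *\<^sub>R (v - rrm_z beta u v)"
proof (cases "beta > 0")
  case False
  then have "beta = 0" "lam = 0"
    using assms by auto
  then show ?thesis
    by (simp add: rrm_z_def rrm_B_def)
next
  case True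
  have ne: "beta \<noteq> 1"
    using assms by simp
  have c: "lam - beta / (1 - beta) = rrm_B beta lam * (- (beta / (1 - beta)))"
    using True ne by (simp add: rrm_B_def field_simps)
  have "v + lam *\<^sub>R (v - u) - rrm_z beta u v = (v - rrm_z beta u v) + lam *\<^sub>R (v - u)"
    by simp
  also have "\<dots> = (lam - beta / (1 - beta)) *\<^sub>R (v - u)"
    unfolding minus_rrm_z[OF ne] by (simp add: algebra_simps)
  also have "\<dots> = rrm_B beta lam *\<^sub>R (v - rrm_z beta u v)"
    unfolding minus_rrm_z[OF ne] scaleR_scaleR by (simp only: c)
  finally show ?thesis .
qed

lemma heavy_ball_extrapolation_expansion:
  fixes U V D :: "nat \<Rightarrow> 'a::real_vector"
  assumes U_Suc: "\<And>i. U (Suc i) = V i"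
    and V_Suc: "\<And>i. V (Suc i) = V i - al *\<^sub>R D i + beta *\<^sub>R (V i - U i)"
    and params: "0 \<le> beta" "beta < 1" "0 \<le> lam" "lam \<le> beta / (1 - beta)"
  defines "z \<equiv> rrm_z beta (U 0) (V 0)" and "B \<equiv> rrm_B beta lam"
  shows "V i + lam *\<^sub>R (V i - U i) - z
      = (B * beta ^ i) *\<^sub>R (V 0 - z) - (al / (1 - beta)) *\<^sub>R (\<Sum>j<i. (1 - B * beta ^ (i - j)) *\<^sub>R D j)"
proof -
  define Z where "Z i = rrm_z beta (U i) (V i)" for i
  have ne: "beta \<noteq> 1"
    using params by simp
  have Z_closed: "Z i = z - (al / (1 - beta)) *\<^sub>R (\<Sum>j<i. D j)" for i
  proof (induction i)
    case (Suc i)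
    have "Z (Suc i) = Z i - (al / (1 - beta)) *\<^sub>R D i"
      unfolding Z_def U_Suc V_Suc by (rule rrm_z_heavy_ball_step[OF ne])
    then show ?case
      using Suc by (simp add: algebra_simps)
  qed (simp add: Z_def z_def)
  have V_minus_Z: "V i - Z i = beta ^ i *\<^sub>R (V 0 - z) + (al / (1 - beta)) *\<^sub>R (\<Sum>j<i. beta ^ (i - j) *\<^sub>R D j)"
    for i
  proof (induction i)
    case (Suc i)
    have "V (Suc i) - Z (Suc i) = beta *\<^sub>R (V i - Z i) + (beta * (al / (1 - beta))) *\<^sub>R D i"
      unfolding Z_def U_Suc V_Suc by (rule rrm_heavy_ball_step_minus_z[OF ne])
    moreover have "(\<Sum>j<i. beta ^ (Suc i - j) *\<^sub>R D j) = beta *\<^sub>R (\<Sum>j<i. beta ^ (i - j) *\<^sub>R D j)"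
      by (simp add: scaleR_sum_right Suc_diff_le)
    ultimately show ?case
      using Suc by (simp add: algebra_simps)
  qed (simp add: Z_def z_def)
  have "V i + lam *\<^sub>R (V i - U i) - z = (V i + lam *\<^sub>R (V i - U i) - Z i) + (Z i - z)"
    by simp
  also have "\<dots> = B *\<^sub>R (V i - Z i) + (Z i - z)"
    unfolding Z_def B_def extrapolation_minus_rrm_z[OF params] ..
  also have "\<dots> = B *\<^sub>R (beta ^ i *\<^sub>R (V 0 - z) + (al / (1 - beta)) *\<^sub>R (\<Sum>j<i. beta ^ (i - j) *\<^sub>R D j))
      - (al / (1 - beta)) *\<^sub>R (\<Sum>j<i. D j)"
    unfolding V_minus_Z by (simp add: Z_closed)
  finally show ?thesis
    by (simp add: algebra_simps scaleR_sum_right sum_subtractf sum.distrib)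
qed

text \<open>Batches are numbered from \<open>0\<close> here and from \<open>1\<close> in the paper: the direction of inner step
  \<open>j + 1\<close> is \<open>rrm_batch_grad g b p j (rrm_yhat \<dots> (Suc j))\<close>.\<close>
definition rrm_batch_grad :: "(nat \<Rightarrow> 'a::real_vector \<Rightarrow> 'a) \<Rightarrow> nat \<Rightarrow> (nat \<Rightarrow> nat) \<Rightarrow> nat \<Rightarrow> 'a \<Rightarrow> 'a"
  where "rrm_batch_grad g b p j y = (1 / real b) *\<^sub>R (\<Sum>l = j * b + 1 .. Suc j * b. g (p l) y)"

lemma rrm_yhat_minus_rrm_z:
  fixes g :: "nat \<Rightarrow> 'a::real_inner \<Rightarrow> 'a" and p :: "nat \<Rightarrow> nat" and xt x :: 'a and b :: nat and al :: real
  assumes "0 \<le> beta" "beta < 1" "0 \<le> lam" "lam \<le> beta / (1 - beta)"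
  defines "yhat \<equiv> rrm_yhat g b al beta lam p xt x" and "z \<equiv> rrm_z beta xt x" and "B \<equiv> rrm_B beta lam"
  shows "yhat (Suc i) - z = (B * beta ^ i) *\<^sub>R (x - z)
      - (al / (1 - beta)) *\<^sub>R (\<Sum>j<i. (1 - B * beta ^ (i - j)) *\<^sub>R rrm_batch_grad g b p j (yhat (Suc j)))"
proof -
  define U where "U i = fst (rrm_inner g b al beta lam p xt x i)" for i
  define V where "V i = snd (rrm_inner g b al beta lam p xt x i)" for i
  have yhat_Suc: "yhat (Suc i) = V i + lam *\<^sub>R (V i - U i)" for i
    by (simp add: yhat_def rrm_yhat_def U_def V_def Let_def)
  have "U (Suc i) = V i" for i
    by (simp add: U_def V_def Let_def)
  moreover have "V (Suc i) = V i - al *\<^sub>R rrm_batch_grad g b p i (yhat (Suc i)) + beta *\<^sub>R (V i - U i)" for i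
    unfolding yhat_Suc rrm_batch_grad_def by (simp add: U_def V_def Let_def)
  moreover have "U 0 = xt" "V 0 = x"
    by (simp_all add: U_def V_def)
  ultimately show ?thesis
    using heavy_ball_extrapolation_expansion[of U V al _ beta lam i] assms
    unfolding yhat_Suc z_def B_def by simp
qed

lemma norm_rrm_batch_grad_diff_le:
  assumes "0 < b" "j < i"
    and lip: "\<And>l y w. l \<in> {1 .. i * b} \<Longrightarrow> norm (g (p l) y - g (p l) w) \<le> L * norm (y - w)"
  shows "norm (rrm_batch_grad g b p j y - rrm_batch_grad g b p j w) \<le> L * norm (y - w)"
proof -
  have "Suc j * b \<le> i * b"
    using \<open>j < i\<close> by (intro mult_right_mono) auto
  then have "norm (\<Sum>l = j * b + 1 .. Suc j * b. g (p l) y - g (p l) w) \<le> (\<Sum>l = j * b + 1 .. Suc j * b. L * norm (y - w))"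
    by (intro order_trans[OF norm_sum sum_mono] lip) auto
  then have "(1 / real b) * norm (\<Sum>l = j * b + 1 .. Suc j * b. g (p l) y - g (p l) w) \<le> L * norm (y - w)"
    using \<open>0 < b\<close> by (simp add: field_simps)
  then show ?thesis
    by (simp add: rrm_batch_grad_def sum_subtractf flip: scaleR_diff_right)
qed

lemma power2_add_le_convex:
  fixes R u v :: real
  assumes "0 \<le> R" "R < 1"
  shows "(R * u + v)\<^sup>2 \<le> R * u\<^sup>2 + v\<^sup>2 / (1 - R)"
proof -
  have "R * u\<^sup>2 + v\<^sup>2 / (1 - R) - (R * u + v)\<^sup>2 = R / (1 - R) * ((1 - R) * u - v)\<^sup>2"
    using assms by (simp add: power2_eq_square field_simps)
  moreover have "0 \<le> R / (1 - R) * ((1 - R) * u - v)\<^sup>2"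
    using assms by simp
  ultimately show ?thesis
    by linarith
qed

lemma power2_sum3_le: "((x::real) + y + w)\<^sup>2 \<le> 3 * (x\<^sup>2 + y\<^sup>2 + w\<^sup>2)"
proof -
  have "0 \<le> (x - y)\<^sup>2 + (y - w)\<^sup>2 + (x - w)\<^sup>2"
    by simp
  then show ?thesis
    by (simp add: power2_eq_square algebra_simps)
qed

lemma norm_weighted_sum_split_le:
  fixes c :: "'a::real_normed_vector" and xi dl :: "nat \<Rightarrow> 'a" and w a :: "nat \<Rightarrow> real"
  assumes w: "\<And>j. j < i \<Longrightarrow> 0 \<le> w j \<and> w j \<le> r"
    and dl: "\<And>j. j < i \<Longrightarrow> norm (dl j) \<le> a j"
  shows "norm (\<Sum>j<i. w j *\<^sub>R (c + xi j + dl j))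
      \<le> r * real i * norm c + norm (\<Sum>j<i. w j *\<^sub>R xi j) + r * (\<Sum>j<i. a j)"
proof -
  have "(\<Sum>j<i. w j) \<le> r * real i"
    using sum_mono[of "{..<i}" w "\<lambda>_. r"] w by (simp add: mult.commute)
  moreover have "0 \<le> (\<Sum>j<i. w j)"
    using w by (intro sum_nonneg) auto
  ultimately have drift: "norm ((\<Sum>j<i. w j) *\<^sub>R c) \<le> r * real i * norm c"
    using mult_right_mono[OF _ norm_ge_zero, of "\<Sum>j<i. w j" "r * real i" c] by simp
  have "norm (w j *\<^sub>R dl j) \<le> r * a j" if "j < i" for j
  proof -
    have "norm (w j *\<^sub>R dl j) = w j * norm (dl j)"
      using w[OF that] by simp
    also have "\<dots> \<le> r * a j"
      using w[OF that] dl[OF that] by (intro mult_mono) auto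
    finally show ?thesis .
  qed
  then have err: "norm (\<Sum>j<i. w j *\<^sub>R dl j) \<le> r * (\<Sum>j<i. a j)"
    unfolding sum_distrib_left by (intro order_trans[OF norm_sum sum_mono]) auto
  have "(\<Sum>j<i. w j *\<^sub>R (c + xi j + dl j))
      = (\<Sum>j<i. w j) *\<^sub>R c + (\<Sum>j<i. w j *\<^sub>R xi j) + (\<Sum>j<i. w j *\<^sub>R dl j)"
    by (simp add: scaleR_add_right sum.distrib scaleR_sum_left)
  then show ?thesis
    using drift err norm_triangle_ineq[of "(\<Sum>j<i. w j) *\<^sub>R c + (\<Sum>j<i. w j *\<^sub>R xi j)" "\<Sum>j<i. w j *\<^sub>R dl j"]
      norm_triangle_ineq[of "(\<Sum>j<i. w j) *\<^sub>R c" "\<Sum>j<i. w j *\<^sub>R xi j"]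
    by simp
qed

text \<open>The weights \<open>w j\<close> stay below \<open>1 - R\<close>, which is what lets the drift \<open>c\<close> and the errors
  \<open>dl j\<close> pass through the convexity bound without picking up the factor \<open>1 / (1 - R)\<close>.\<close>
lemma norm_sq_momentum_split_le:
  fixes e c :: "'a::real_normed_vector" and xi dl :: "nat \<Rightarrow> 'a" and w a :: "nat \<Rightarrow> real"
  assumes R: "0 \<le> R" "R < 1" and "0 \<le> \<tau>"
    and w: "\<And>j. j < i \<Longrightarrow> 0 \<le> w j \<and> w j \<le> 1 - R"
    and dl: "\<And>j. j < i \<Longrightarrow> norm (dl j) \<le> a j"
  shows "(norm (R *\<^sub>R e - \<tau> *\<^sub>R (\<Sum>j<i. w j *\<^sub>R (c + xi j + dl j))))\<^sup>2
      \<le> R * (norm e)\<^sup>2 + 3 * \<tau>\<^sup>2 * ((real i)\<^sup>2 * (norm c)\<^sup>2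
          + (norm (\<Sum>j<i. w j *\<^sub>R xi j))\<^sup>2 / (1 - R) + real i * (\<Sum>j<i. (a j)\<^sup>2))"
proof -
  define T where "T = (\<Sum>j<i. w j *\<^sub>R (c + xi j + dl j))"
  define X where "X = norm (\<Sum>j<i. w j *\<^sub>R xi j)"
  define A where "A = (\<Sum>j<i. a j)"
  have T: "norm T \<le> (1 - R) * real i * norm c + X + (1 - R) * A"
    unfolding T_def X_def A_def by (rule norm_weighted_sum_split_le[OF w dl])
  have "norm (R *\<^sub>R e - \<tau> *\<^sub>R T) \<le> R * norm e + \<tau> * norm T"
    using norm_triangle_ineq4[of "R *\<^sub>R e" "\<tau> *\<^sub>R T"] R \<open>0 \<le> \<tau>\<close> by simp
  then have "(norm (R *\<^sub>R e - \<tau> *\<^sub>R T))\<^sup>2 \<le> (R * norm e + \<tau> * norm T)\<^sup>2"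
    by (intro power_mono) auto
  also have "\<dots> \<le> R * (norm e)\<^sup>2 + (\<tau> * norm T)\<^sup>2 / (1 - R)"
    by (rule power2_add_le_convex[OF R])
  also have "(\<tau> * norm T)\<^sup>2 \<le> \<tau>\<^sup>2 * ((1 - R) * real i * norm c + X + (1 - R) * A)\<^sup>2"
    unfolding power_mult_distrib using T by (intro mult_left_mono power_mono) auto
  also have "\<dots> \<le> \<tau>\<^sup>2 * (3 * (((1 - R) * real i * norm c)\<^sup>2 + X\<^sup>2 + ((1 - R) * A)\<^sup>2))"
    by (intro mult_left_mono power2_sum3_le) auto
  also have "\<dots> / (1 - R) = 3 * \<tau>\<^sup>2 * ((1 - R) * ((real i)\<^sup>2 * (norm c)\<^sup>2) + X\<^sup>2 / (1 - R) + (1 - R) * A\<^sup>2)"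
    using R by (simp add: power2_eq_square field_simps)
  also have "\<dots> \<le> 3 * \<tau>\<^sup>2 * ((real i)\<^sup>2 * (norm c)\<^sup>2 + X\<^sup>2 / (1 - R) + real i * (\<Sum>j<i. (a j)\<^sup>2))"
  proof -
    have "(1 - R) * ((real i)\<^sup>2 * (norm c)\<^sup>2) \<le> (real i)\<^sup>2 * (norm c)\<^sup>2" "(1 - R) * A\<^sup>2 \<le> A\<^sup>2"
      using R by (auto intro: mult_left_le_one_le)
    moreover have "A\<^sup>2 \<le> real i * (\<Sum>j<i. (a j)\<^sup>2)"
      using sum_squared_le_sum_of_squares[of a "{..<i}"] by (simp add: A_def mult.commute)
    ultimately show ?thesis
      by (intro mult_left_mono) auto
  qed
  finally show ?thesis
    using R by (simp add: T_def X_def divide_right_mono)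
qed

lemma momentum_coeff_bounds:
  fixes B beta :: real
  assumes "0 \<le> B" "B \<le> 1" "0 \<le> beta" "beta \<le> 1" "j < i"
  shows "0 \<le> 1 - B * beta ^ (i - j)" "1 - B * beta ^ (i - j) \<le> 1 - B * beta ^ i"
proof -
  have "B * beta ^ (i - j) \<le> 1"
    using assms by (metis mult_le_one power_le_one zero_le_power)
  then show "0 \<le> 1 - B * beta ^ (i - j)"
    by simp
  have "beta ^ i \<le> beta ^ (i - j)"
    using assms by (intro power_decreasing) auto
  then show "1 - B * beta ^ (i - j) \<le> 1 - B * beta ^ i"
    using assms by (simp add: mult_left_mono)
qed

lemma momentum_decay_bounds:
  fixes B beta :: real
  assumes "0 \<le> B" "B \<le> 1" "0 \<le> beta" "beta < 1"
  shows "0 \<le> B * beta ^ i" "B * beta ^ i \<le> B" "0 < i \<Longrightarrow> B * beta ^ i < 1"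
proof -
  show "0 \<le> B * beta ^ i"
    using assms by simp
  show "B * beta ^ i \<le> B"
    using assms by (intro mult_left_le power_le_one) auto
  assume "0 < i"
  then have "beta ^ i \<le> beta"
    using assms power_decreasing[of 1 i beta] by simp
  then show "B * beta ^ i < 1"
    using assms by (smt (verit) mult_left_le_one_le zero_le_power)
qed

lemma rrm_yhat_dist_sq_le:
  fixes g :: "nat \<Rightarrow> 'a::real_inner \<Rightarrow> 'a" and p :: "nat \<Rightarrow> nat" and xt x c :: 'a
    and b :: nat and al :: real
  assumes "0 < b" "0 \<le> al" "0 \<le> beta" "beta < 1" "0 \<le> lam" "lam \<le> beta / (1 - beta)"
    and lip: "\<And>l y w. l \<in> {1 .. i * b} \<Longrightarrow> norm (g (p l) y - g (p l) w) \<le> L * norm (y - w)"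
  defines "yhat \<equiv> rrm_yhat g b al beta lam p xt x" and "z \<equiv> rrm_z beta xt x"
    and "B \<equiv> rrm_B beta lam" and "\<tau> \<equiv> al / (1 - beta)"
  shows "(norm (yhat (Suc i) - z))\<^sup>2 \<le> B * (norm (x - z))\<^sup>2 + 3 * \<tau>\<^sup>2 * ((real i)\<^sup>2 * (norm c)\<^sup>2
      + (norm (\<Sum>j<i. (1 - B * beta ^ (i - j)) *\<^sub>R (rrm_batch_grad g b p j z - c)))\<^sup>2 / (1 - B * beta ^ i)
      + real i * L\<^sup>2 * (\<Sum>j<i. (norm (yhat (Suc j) - z))\<^sup>2))"
proof -
  have B: "0 \<le> B" "B \<le> 1"
    using rrm_B_bounds assms unfolding B_def by auto
  have expansion: "yhat (Suc i) - z = (B * beta ^ i) *\<^sub>R (x - z)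
      - \<tau> *\<^sub>R (\<Sum>j<i. (1 - B * beta ^ (i - j)) *\<^sub>R rrm_batch_grad g b p j (yhat (Suc j)))"
    unfolding yhat_def z_def B_def \<tau>_def by (rule rrm_yhat_minus_rrm_z) (use assms in auto)
  show ?thesis
  proof (cases "i = 0")
    case True
    have "(norm (yhat (Suc i) - z))\<^sup>2 = B * B * (norm (x - z))\<^sup>2"
      using expansion True B by (simp add: power2_eq_square)
    also have "\<dots> \<le> B * (norm (x - z))\<^sup>2"
      using B by (intro mult_right_mono mult_left_le_one_le) auto
    finally show ?thesis
      using True by simp
  next
    case False
    define R where "R = B * beta ^ i"
    have R: "0 \<le> R" "R < 1" "R \<le> B"
      using momentum_decay_bounds[OF B] assms False unfolding R_def by auto
    have split_expansion: "yhat (Suc i) - z = R *\<^sub>R (x - z) - \<tau> *\<^sub>R (\<Sum>j<i. (1 - B * beta ^ (i - j)) *\<^sub>R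
        (c + (rrm_batch_grad g b p j z - c) + (rrm_batch_grad g b p j (yhat (Suc j)) - rrm_batch_grad g b p j z)))"
      unfolding expansion R_def by simp
    have split_bound: "(norm (yhat (Suc i) - z))\<^sup>2 \<le> R * (norm (x - z))\<^sup>2 + 3 * \<tau>\<^sup>2 * ((real i)\<^sup>2 * (norm c)\<^sup>2
        + (norm (\<Sum>j<i. (1 - B * beta ^ (i - j)) *\<^sub>R (rrm_batch_grad g b p j z - c)))\<^sup>2 / (1 - R)
        + real i * (\<Sum>j<i. (L * norm (yhat (Suc j) - z))\<^sup>2))"
      unfolding split_expansion
    proof (rule norm_sq_momentum_split_le[OF R(1,2)])
      show "0 \<le> \<tau>"
        using assms unfolding \<tau>_def by simp
      show "0 \<le> 1 - B * beta ^ (i - j) \<and> 1 - B * beta ^ (i - j) \<le> 1 - R" if "j < i" for j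
        using momentum_coeff_bounds[OF B _ _ that] assms unfolding R_def by simp
    qed (rule norm_rrm_batch_grad_diff_le[where g = g and p = p and L = L, OF \<open>0 < b\<close> _ lip])
    have sum_eq: "real i * (\<Sum>j<i. (L * norm (yhat (Suc j) - z))\<^sup>2)
        = real i * L\<^sup>2 * (\<Sum>j<i. (norm (yhat (Suc j) - z))\<^sup>2)"
      by (simp add: power_mult_distrib sum_distrib_left mult.assoc)
    have "R * (norm (x - z))\<^sup>2 \<le> B * (norm (x - z))\<^sup>2"
      using R by (intro mult_right_mono) auto
    then show ?thesis
      using split_bound unfolding sum_eq R_def by linarith
  qed
qed

lemma sum_of_nat_lessThan_le: "(\<Sum>i<m. real i) \<le> (real m)\<^sup>2 / 2"
  by (induction m) (simp_all add: power2_eq_square field_simps)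

lemma sum_of_nat_sq_lessThan_le: "(\<Sum>i<m. (real i)\<^sup>2) \<le> real m ^ 3 / 3"
proof (induction m)
  case (Suc m)
  have "real m ^ 3 / 3 + (real m)\<^sup>2 \<le> real (Suc m) ^ 3 / 3"
    by (simp add: power2_eq_square power3_eq_cube field_simps)
  then show ?case
    using Suc by simp
qed simp

lemma sum_sq_le_of_triangular_bound:
  fixes a X :: "nat \<Rightarrow> real"
  assumes "0 \<le> C"
    and bound: "\<And>i. i < m \<Longrightarrow>
      (a i)\<^sup>2 \<le> K + 3 * \<tau>\<^sup>2 * ((real i)\<^sup>2 * C + X i + real i * L\<^sup>2 * (\<Sum>j<i. (a j)\<^sup>2))"
  shows "(1 - 3 / 2 * (\<tau>\<^sup>2 * (real m)\<^sup>2 * L\<^sup>2)) * (\<Sum>i<m. (a i)\<^sup>2)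
      \<le> real m * K + \<tau>\<^sup>2 * real m ^ 3 * C + 3 * \<tau>\<^sup>2 * (\<Sum>i<m. X i)"
proof -
  define S where "S = (\<Sum>i<m. (a i)\<^sup>2)"
  have "(\<Sum>i<m. real i * L\<^sup>2 * (\<Sum>j<i. (a j)\<^sup>2)) \<le> (\<Sum>i<m. real i * L\<^sup>2 * S)"
    unfolding S_def by (intro sum_mono mult_left_mono sum_mono2) auto
  also have "\<dots> \<le> (real m)\<^sup>2 / 2 * L\<^sup>2 * S"
    unfolding sum_distrib_right[symmetric] mult.assoc
    by (intro mult_right_mono sum_of_nat_lessThan_le) (simp add: S_def sum_nonneg)
  finally have cross: "(\<Sum>i<m. real i * L\<^sup>2 * (\<Sum>j<i. (a j)\<^sup>2)) \<le> (real m)\<^sup>2 / 2 * L\<^sup>2 * S" .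
  have drift: "(\<Sum>i<m. (real i)\<^sup>2 * C) \<le> real m ^ 3 / 3 * C"
    unfolding sum_distrib_right[symmetric] using \<open>0 \<le> C\<close> by (intro mult_right_mono sum_of_nat_sq_lessThan_le)
  have "S \<le> (\<Sum>i<m. K + 3 * \<tau>\<^sup>2 * ((real i)\<^sup>2 * C + X i + real i * L\<^sup>2 * (\<Sum>j<i. (a j)\<^sup>2)))"
    unfolding S_def by (intro sum_mono bound) simp
  also have "\<dots> = real m * K + 3 * \<tau>\<^sup>2 * ((\<Sum>i<m. (real i)\<^sup>2 * C) + (\<Sum>i<m. X i)
      + (\<Sum>i<m. real i * L\<^sup>2 * (\<Sum>j<i. (a j)\<^sup>2)))"
    by (simp only: sum.distrib sum_distrib_left[symmetric]) simp
  also have "\<dots> \<le> real m * K + 3 * \<tau>\<^sup>2 * (real m ^ 3 / 3 * C + (\<Sum>i<m. X i) + (real m)\<^sup>2 / 2 * L\<^sup>2 * S)"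
    using drift cross by (intro add_left_mono mult_left_mono add_mono) auto
  finally show ?thesis
    unfolding S_def[symmetric] by (simp add: algebra_simps power3_eq_cube power2_eq_square)
qed

lemma sum_batches: "(\<Sum>j<i. \<Sum>l = j * b + 1 .. Suc j * b. F l) = (\<Sum>l = 1 .. i * b. F l)"
proof (induction i)
  case (Suc i)
  have "(\<Sum>l = 1 .. Suc i * b. F l) = (\<Sum>l = 1 .. i * b + b. F l)"
    by (simp add: add.commute)
  also have "\<dots> = (\<Sum>l = 1 .. i * b. F l) + (\<Sum>l = i * b + 1 .. i * b + b. F l)"
    by (rule sum.ub_add_nat) simp
  finally show ?case
    using Suc by (simp add: add.commute)
qed simp

lemma batch_index_div:
  assumes "l \<in> {j * b + 1 .. Suc j * b}" "0 < b"
  shows "(l - 1) div b = j"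
proof -
  have "j * b \<le> l - 1" "l - 1 < Suc j * b"
    using assms by auto
  then show ?thesis
    using assms(2) by (metis div_nat_eqI mult.commute)
qed

text \<open>The coefficient of the \<open>l\<close>-th sampled component gradient (it lies in batch \<open>(l - 1) div b\<close>)
  in the expansion of \<open>rrm_yhat \<dots> (Suc i)\<close>.\<close>
definition momentum_weight :: "real \<Rightarrow> real \<Rightarrow> nat \<Rightarrow> nat \<Rightarrow> nat \<Rightarrow> real"
  where "momentum_weight B beta b i l = (1 - B * beta ^ (i - (l - 1) div b)) / real b"

lemma rrm_batch_noise_flatten:
  fixes g :: "nat \<Rightarrow> 'a::real_vector \<Rightarrow> 'a"
  assumes "0 < b"
  shows "(\<Sum>j<i. (1 - B * beta ^ (i - j)) *\<^sub>R (rrm_batch_grad g b p j z - c))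
      = (\<Sum>l = 1 .. i * b. momentum_weight B beta b i l *\<^sub>R (g (p l) z - c))"
proof -
  have batch: "(1 - B * beta ^ (i - j)) *\<^sub>R (rrm_batch_grad g b p j z - c)
      = (\<Sum>l = j * b + 1 .. Suc j * b. momentum_weight B beta b i l *\<^sub>R (g (p l) z - c))" for j
  proof -
    have "(1 - B * beta ^ (i - j)) *\<^sub>R (rrm_batch_grad g b p j z - c)
        = (\<Sum>l = j * b + 1 .. Suc j * b. ((1 - B * beta ^ (i - j)) / real b) *\<^sub>R (g (p l) z - c))"
      using assms
      by (simp add: rrm_batch_grad_def sum_subtractf scaleR_diff_right sum_constant_scaleR scaleR_sum_right)
    also have "\<dots> = (\<Sum>l = j * b + 1 .. Suc j * b. momentum_weight B beta b i l *\<^sub>R (g (p l) z - c))"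
    proof (rule sum.cong[OF refl])
      fix l
      assume "l \<in> {j * b + 1 .. Suc j * b}"
      then show "((1 - B * beta ^ (i - j)) / real b) *\<^sub>R (g (p l) z - c)
          = momentum_weight B beta b i l *\<^sub>R (g (p l) z - c)"
        by (simp only: momentum_weight_def batch_index_div[OF _ assms])
    qed
    finally show ?thesis .
  qed
  show ?thesis
    unfolding batch sum_batches ..
qed

lemma rrm_epoch_dist_sum_le:
  fixes g :: "nat \<Rightarrow> 'a::real_inner \<Rightarrow> 'a" and p :: "nat \<Rightarrow> nat" and xt x c :: 'a
    and b m :: nat and al :: real
  assumes "0 < b" "0 \<le> al" "0 \<le> beta" "beta < 1" "0 \<le> lam" "lam \<le> beta / (1 - beta)"
    and lip: "\<And>l y w. l \<in> {1 .. m * b} \<Longrightarrow> norm (g (p l) y - g (p l) w) \<le> L * norm (y - w)"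
  defines "z \<equiv> rrm_z beta xt x" and "B \<equiv> rrm_B beta lam" and "\<tau> \<equiv> al / (1 - beta)"
  shows "(1 - 3 / 2 * (\<tau>\<^sup>2 * (real m)\<^sup>2 * L\<^sup>2)) * (\<Sum>t = 1..m. (norm (rrm_yhat g b al beta lam p xt x t - z))\<^sup>2)
      \<le> real m * (B * (norm (x - z))\<^sup>2) + \<tau>\<^sup>2 * real m ^ 3 * (norm c)\<^sup>2
        + 3 * \<tau>\<^sup>2 * (\<Sum>i<m. (norm (\<Sum>l = 1 .. i * b. momentum_weight B beta b i l *\<^sub>R (g (p l) z - c)))\<^sup>2
            / (1 - B * beta ^ i))"
proof -
  have "(\<Sum>t = 1..m. (norm (rrm_yhat g b al beta lam p xt x t - z))\<^sup>2)
      = (\<Sum>i<m. (norm (rrm_yhat g b al beta lam p xt x (Suc i) - z))\<^sup>2)"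
    by (simp add: sum.atLeast1_atMost_eq)
  moreover have "(1 - 3 / 2 * (\<tau>\<^sup>2 * (real m)\<^sup>2 * L\<^sup>2)) * (\<Sum>i<m. (norm (rrm_yhat g b al beta lam p xt x (Suc i) - z))\<^sup>2)
      \<le> real m * (B * (norm (x - z))\<^sup>2) + \<tau>\<^sup>2 * real m ^ 3 * (norm c)\<^sup>2
        + 3 * \<tau>\<^sup>2 * (\<Sum>i<m. (norm (\<Sum>l = 1 .. i * b. momentum_weight B beta b i l *\<^sub>R (g (p l) z - c)))\<^sup>2
            / (1 - B * beta ^ i))"
  proof (rule sum_sq_le_of_triangular_bound)
    fix i
    assume "i < m"
    have "i * b \<le> m * b"
      using \<open>i < m\<close> by simp
    then have "l \<in> {1 .. m * b}" if "l \<in> {1 .. i * b}" for l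
      using that by (metis atLeastAtMost_iff le_trans)
    then show "(norm (rrm_yhat g b al beta lam p xt x (Suc i) - z))\<^sup>2 \<le> B * (norm (x - z))\<^sup>2 + 3 * \<tau>\<^sup>2 *
        ((real i)\<^sup>2 * (norm c)\<^sup>2
          + (norm (\<Sum>l = 1 .. i * b. momentum_weight B beta b i l *\<^sub>R (g (p l) z - c)))\<^sup>2 / (1 - B * beta ^ i)
          + real i * L\<^sup>2 * (\<Sum>j<i. (norm (rrm_yhat g b al beta lam p xt x (Suc j) - z))\<^sup>2))"
      using rrm_yhat_dist_sq_le[of b al beta lam i g p L xt x c] assms lip
      unfolding z_def B_def \<tau>_def rrm_batch_noise_flatten[OF \<open>0 < b\<close>] by simp
  qed simp
  ultimately show ?thesis
    by simp
qed

section \<open>Sampling errors of reshuffled mini-batches\<close>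

lemma momentum_weight_bounds:
  assumes "0 < b" "0 \<le> B" "B \<le> 1" "0 \<le> beta" "beta \<le> 1" "l \<in> {1 .. i * b}"
  shows "0 \<le> momentum_weight B beta b i l" "momentum_weight B beta b i l \<le> (1 - B * beta ^ i) / real b"
proof -
  have "l - 1 < i * b"
    using assms by auto
  then have "(l - 1) div b < i"
    by (rule less_mult_imp_div_less)
  from momentum_coeff_bounds[OF assms(2-5) this]
  show "0 \<le> momentum_weight B beta b i l" "momentum_weight B beta b i l \<le> (1 - B * beta ^ i) / real b"
    by (simp_all add: momentum_weight_def divide_right_mono)
qed

lemma sum_momentum_weight_sq_le:
  assumes "0 < b" "0 \<le> B" "B \<le> 1" "0 \<le> beta" "beta < 1"
  shows "(\<Sum>l = 1 .. i * b. (momentum_weight B beta b i l)\<^sup>2) \<le> real i / real b * (1 - B * beta ^ i)"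
proof -
  define R where "R = B * beta ^ i"
  have R: "0 \<le> R" "R \<le> 1"
    using momentum_decay_bounds[OF assms(2-5), of i] assms unfolding R_def by auto
  have "(momentum_weight B beta b i l)\<^sup>2 \<le> (1 - R) / (real b)\<^sup>2" if "l \<in> {1 .. i * b}" for l
  proof -
    note w = momentum_weight_bounds[OF assms(1-4) _ that]
    have "(momentum_weight B beta b i l)\<^sup>2 \<le> ((1 - R) / real b)\<^sup>2"
      using w assms unfolding R_def by (intro power_mono) auto
    also have "\<dots> \<le> (1 - R) / (real b)\<^sup>2"
      using R by (simp add: power_divide divide_right_mono power2_eq_square mult_left_le_one_le)
    finally show ?thesis .
  qed
  then have "(\<Sum>l = 1 .. i * b. (momentum_weight B beta b i l)\<^sup>2) \<le> real (i * b) * ((1 - R) / (real b)\<^sup>2)"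
    using sum_mono[of "{1 .. i * b}" "\<lambda>l. (momentum_weight B beta b i l)\<^sup>2" "\<lambda>_. (1 - R) / (real b)\<^sup>2"]
    by simp
  then show ?thesis
    using \<open>0 < b\<close> by (simp add: R_def power2_eq_square)
qed

lemma momentum_noise_div_le:
  assumes "0 < b" "0 \<le> B" "B \<le> 1" "0 \<le> beta" "beta < 1" "0 \<le> Q"
    and N: "N \<le> (\<Sum>l = 1 .. i * b. (momentum_weight B beta b i l)\<^sup>2) * Q"
  shows "N / (1 - B * beta ^ i) \<le> real i / real b * Q"
proof (cases "i = 0")
  case True
  then show ?thesis
    using N assms by (simp add: divide_nonpos_nonneg)
next
  case False
  then have R: "B * beta ^ i < 1"
    using momentum_decay_bounds[OF assms(2-5)] by simp
  have "N \<le> real i / real b * (1 - B * beta ^ i) * Q"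
    using N sum_momentum_weight_sq_le[OF assms(1-5)] \<open>0 \<le> Q\<close> by (meson mult_right_mono order_trans)
  then show ?thesis
    using R by (simp add: pos_divide_le_eq mult_ac)
qed

lemma norm_weighted_sum_permuted_sq_le:
  fixes h :: "'b \<Rightarrow> 'a::real_inner"
  assumes "p permutes S" "finite S" "L \<subseteq> S"
  shows "(norm (\<Sum>l\<in>L. w l *\<^sub>R h (p l)))\<^sup>2 \<le> (\<Sum>l\<in>L. (w l)\<^sup>2) * (\<Sum>k\<in>S. (norm (h k))\<^sup>2)"
proof -
  have "norm (\<Sum>l\<in>L. w l *\<^sub>R h (p l)) \<le> (\<Sum>l\<in>L. \<bar>w l\<bar> * norm (h (p l)))"
    by (rule order_trans[OF norm_sum]) simp
  then have "(norm (\<Sum>l\<in>L. w l *\<^sub>R h (p l)))\<^sup>2 \<le> (\<Sum>l\<in>L. \<bar>w l\<bar> * norm (h (p l)))\<^sup>2"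
    by (intro power_mono) auto
  also have "\<dots> \<le> (\<Sum>l\<in>L. (w l)\<^sup>2) * (\<Sum>l\<in>L. (norm (h (p l)))\<^sup>2)"
    using Cauchy_Schwarz_ineq_sum[of "\<lambda>l. \<bar>w l\<bar>" "\<lambda>l. norm (h (p l))" L] by simp
  also have "(\<Sum>l\<in>L. (norm (h (p l)))\<^sup>2) = (\<Sum>k\<in>p ` L. (norm (h k))\<^sup>2)"
    using permutes_inj[OF assms(1)] by (simp add: sum.reindex inj_on_def)
  also have "\<dots> \<le> (\<Sum>k\<in>S. (norm (h k))\<^sup>2)"
    using assms permutes_image[OF assms(1)] by (intro sum_mono2) auto
  finally show ?thesis
    by (simp add: mult_left_mono sum_nonneg)
qed

lemma sum_permutes_apply:
  assumes "p permutes S"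
  shows "(\<Sum>l\<in>S. G (p l)) = (\<Sum>k\<in>S. G k)"
  by (rule sum.reindex_bij_betw[OF permutes_imp_bij[OF assms]])

lemma sum_permutations_apply_eq:
  assumes "l \<in> S" "l' \<in> S"
  shows "(\<Sum>p\<in>{p. p permutes S}. \<Phi> (p l)) = (\<Sum>p\<in>{p. p permutes S}. \<Phi> (p l'))"
  using sum_permutations_compose_right[OF permutes_swap_id[OF assms], of "\<lambda>p. \<Phi> (p l)"] by simp

lemma card_mult_sum_permutations_apply:
  assumes "finite S" "l \<in> S"
  shows "real (card S) * (\<Sum>p\<in>{p. p permutes S}. \<Phi> (p l))
      = real (card {p. p permutes S}) * (\<Sum>k\<in>S. \<Phi> k)"
proof -
  have "(\<Sum>l'\<in>S. \<Sum>p\<in>{p. p permutes S}. \<Phi> (p l')) = (\<Sum>l'\<in>S. \<Sum>p\<in>{p. p permutes S}. \<Phi> (p l))"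
    by (rule sum.cong[OF refl]) (rule sum_permutations_apply_eq[OF _ assms(2)])
  then have "real (card S) * (\<Sum>p\<in>{p. p permutes S}. \<Phi> (p l)) = (\<Sum>l'\<in>S. \<Sum>p\<in>{p. p permutes S}. \<Phi> (p l'))"
    by simp
  also have "\<dots> = (\<Sum>p\<in>{p. p permutes S}. \<Sum>l'\<in>S. \<Phi> (p l'))"
    by (rule sum.swap)
  also have "\<dots> = (\<Sum>p\<in>{p. p permutes S}. \<Sum>k\<in>S. \<Phi> k)"
    by (rule sum.cong[OF refl], rule sum_permutes_apply) simp
  finally show ?thesis
    by simp
qed

lemma sum_permutations_apply2_eq:
  assumes "l' \<in> S" "l'' \<in> S" "l' \<noteq> l" "l'' \<noteq> l"
  shows "(\<Sum>p\<in>{p. p permutes S}. \<Psi> (p l) (p l')) = (\<Sum>p\<in>{p. p permutes S}. \<Psi> (p l) (p l''))"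
  using sum_permutations_compose_right[OF permutes_swap_id[OF assms(1,2)], of "\<lambda>p. \<Psi> (p l) (p l')"] assms
  by (simp add: Transposition.transpose_def)

text \<open>Sampling without replacement is negatively correlated: the off-diagonal sums are all equal, and
  together with the nonnegative diagonal one they add up to \<open>0\<close> when \<open>h\<close> is centred.\<close>
lemma sum_permutations_inner_apply_nonpos:
  fixes h :: "'b \<Rightarrow> 'a::real_inner"
  assumes "finite S" "l \<in> S" "l' \<in> S" "l' \<noteq> l" and centred: "(\<Sum>k\<in>S. h k) = 0"
  shows "(\<Sum>p\<in>{p. p permutes S}. h (p l) \<bullet> h (p l')) \<le> 0"
proof -
  let ?T = "\<lambda>l'. (\<Sum>p\<in>{p. p permutes S}. h (p l) \<bullet> h (p l'))"
  have "(\<Sum>l''\<in>S. ?T l'') = (\<Sum>p\<in>{p. p permutes S}. h (p l) \<bullet> (\<Sum>l''\<in>S. h (p l'')))"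
    by (subst sum.swap) (simp add: inner_sum_right)
  also have "\<dots> = 0"
    using centred by (intro sum.neutral ballI) (simp add: sum_permutes_apply[where G = h])
  finally have "?T l + (\<Sum>l''\<in>S - {l}. ?T l'') = 0"
    using assms by (simp add: sum.remove)
  moreover have "(\<Sum>l''\<in>S - {l}. ?T l'') = real (card (S - {l})) * ?T l'"
    using sum_permutations_apply2_eq[where \<Psi> = "\<lambda>a b. h a \<bullet> h b", OF _ assms(3) _ assms(4)] by simp
  moreover have "0 \<le> ?T l"
    by (intro sum_nonneg) simp
  moreover have "l' \<in> S - {l}"
    using assms by auto
  then have "0 < card (S - {l})"
    using assms(1) card_gt_0_iff by blast
  ultimately show ?thesis
    by (smt (verit) mult_pos_pos of_nat_0_less_iff)
qed

lemma sum_permutations_norm_weighted_sum_sq_le: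
  fixes h :: "'b \<Rightarrow> 'a::real_inner"
  assumes "finite S" "L \<subseteq> S" and centred: "(\<Sum>k\<in>S. h k) = 0" and w: "\<And>l. l \<in> L \<Longrightarrow> 0 \<le> w l"
  shows "(\<Sum>p\<in>{p. p permutes S}. (norm (\<Sum>l\<in>L. w l *\<^sub>R h (p l)))\<^sup>2)
      \<le> (\<Sum>l\<in>L. (w l)\<^sup>2 * (\<Sum>p\<in>{p. p permutes S}. (norm (h (p l)))\<^sup>2))"
proof -
  let ?P = "{p. p permutes S}"
  have "finite L"
    using assms finite_subset by blast
  have "(norm (\<Sum>l\<in>L. w l *\<^sub>R h (p l)))\<^sup>2 = (\<Sum>l\<in>L. \<Sum>l'\<in>L. w l * w l' * (h (p l) \<bullet> h (p l')))" for p
    unfolding power2_norm_eq_inner inner_sum_left inner_sum_right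
    by (subst sum.swap) (simp add: algebra_simps)
  then have "(\<Sum>p\<in>?P. (norm (\<Sum>l\<in>L. w l *\<^sub>R h (p l)))\<^sup>2)
      = (\<Sum>l\<in>L. \<Sum>l'\<in>L. w l * w l' * (\<Sum>p\<in>?P. h (p l) \<bullet> h (p l')))"
    by (simp add: sum.swap[of _ ?P] sum_distrib_left)
  also have "\<dots> \<le> (\<Sum>l\<in>L. (w l)\<^sup>2 * (\<Sum>p\<in>?P. (norm (h (p l)))\<^sup>2))"
  proof (rule sum_mono)
    fix l
    assume l: "l \<in> L"
    have "(\<Sum>l'\<in>L - {l}. w l * w l' * (\<Sum>p\<in>?P. h (p l) \<bullet> h (p l'))) \<le> 0"
      using l assms by (intro sum_nonpos mult_nonneg_nonpos sum_permutations_inner_apply_nonpos) auto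
    moreover have "(\<Sum>l'\<in>L. w l * w l' * (\<Sum>p\<in>?P. h (p l) \<bullet> h (p l')))
        = w l * w l * (\<Sum>p\<in>?P. h (p l) \<bullet> h (p l)) + (\<Sum>l'\<in>L - {l}. w l * w l' * (\<Sum>p\<in>?P. h (p l) \<bullet> h (p l')))"
      using l \<open>finite L\<close> by (simp add: sum.remove)
    moreover have "w l * w l * (\<Sum>p\<in>?P. h (p l) \<bullet> h (p l)) = (w l)\<^sup>2 * (\<Sum>p\<in>?P. (norm (h (p l)))\<^sup>2)"
      unfolding power2_norm_eq_inner by (simp add: power2_eq_square)
    ultimately show "(\<Sum>l'\<in>L. w l * w l' * (\<Sum>p\<in>?P. h (p l) \<bullet> h (p l'))) \<le> (w l)\<^sup>2 * (\<Sum>p\<in>?P. (norm (h (p l)))\<^sup>2)"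
      by linarith
  qed
  finally show ?thesis .
qed

lemma expectation_norm_weighted_sum_permuted_sq_le:
  fixes h :: "'b \<Rightarrow> 'a::real_inner"
  assumes "finite S" "S \<noteq> {}" "L \<subseteq> S" "(\<Sum>k\<in>S. h k) = 0" "\<And>l. l \<in> L \<Longrightarrow> 0 \<le> w l"
  shows "measure_pmf.expectation (pmf_of_set {p. p permutes S}) (\<lambda>p. (norm (\<Sum>l\<in>L. w l *\<^sub>R h (p l)))\<^sup>2)
      \<le> (\<Sum>l\<in>L. (w l)\<^sup>2) * ((\<Sum>k\<in>S. (norm (h k))\<^sup>2) / real (card S))"
proof -
  let ?P = "{p. p permutes S}"
  have fin: "finite ?P" and card: "0 < card ?P" and "0 < card S"
    using assms by (simp_all add: finite_permutations card_permutations card_gt_0_iff)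
  have marginal: "(\<Sum>p\<in>?P. (norm (h (p l)))\<^sup>2) / real (card ?P) = (\<Sum>k\<in>S. (norm (h k))\<^sup>2) / real (card S)"
    if "l \<in> L" for l
    using card_mult_sum_permutations_apply[where \<Phi> = "\<lambda>k. (norm (h k))\<^sup>2", OF \<open>finite S\<close>, of l]
      that assms(3) card \<open>0 < card S\<close> by (auto simp: field_simps)
  have "measure_pmf.expectation (pmf_of_set ?P) (\<lambda>p. (norm (\<Sum>l\<in>L. w l *\<^sub>R h (p l)))\<^sup>2)
      = (\<Sum>p\<in>?P. (norm (\<Sum>l\<in>L. w l *\<^sub>R h (p l)))\<^sup>2) / real (card ?P)"
    using permutes_id by (intro integral_pmf_of_set[OF _ fin]) blast
  also have "\<dots> \<le> (\<Sum>l\<in>L. (w l)\<^sup>2 * (\<Sum>p\<in>?P. (norm (h (p l)))\<^sup>2)) / real (card ?P)"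
    by (intro divide_right_mono sum_permutations_norm_weighted_sum_sq_le assms) auto
  also have "\<dots> = (\<Sum>l\<in>L. (w l)\<^sup>2 * ((\<Sum>p\<in>?P. (norm (h (p l)))\<^sup>2) / real (card ?P)))"
    unfolding sum_divide_distrib[of _ L] by (simp only: times_divide_eq_right)
  also have "\<dots> = (\<Sum>l\<in>L. (w l)\<^sup>2 * ((\<Sum>k\<in>S. (norm (h k))\<^sup>2) / real (card S)))"
    by (rule sum.cong) (simp_all add: marginal)
  also have "\<dots> = (\<Sum>l\<in>L. (w l)\<^sup>2) * ((\<Sum>k\<in>S. (norm (h k))\<^sup>2) / real (card S))"
    by (rule sum_distrib_right[symmetric])
  finally show ?thesis .
qed

lemma set_pmf_of_permutations: "finite S \<Longrightarrow> set_pmf (pmf_of_set {p. p permutes S}) = {p. p permutes S}"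
  by (intro set_pmf_of_set) (auto simp: finite_permutations intro!: exI[of _ id])

lemma integrable_pmf_of_permutations:
  fixes f :: "('b \<Rightarrow> 'b) \<Rightarrow> real"
  shows "finite S \<Longrightarrow> integrable (measure_pmf (pmf_of_set {p. p permutes S})) f"
  by (rule integrable_measure_pmf_finite) (simp add: set_pmf_of_permutations finite_permutations)

lemma momentum_noise_sum_le:
  fixes h :: "nat \<Rightarrow> 'a::real_inner"
  assumes "0 < b" "m * b \<le> n" "0 \<le> B" "B \<le> 1" "0 \<le> beta" "beta < 1" and perm: "p permutes {1..n}"
  shows "(\<Sum>i<m. (norm (\<Sum>l = 1 .. i * b. momentum_weight B beta b i l *\<^sub>R h (p l)))\<^sup>2 / (1 - B * beta ^ i))
      \<le> (real m)\<^sup>2 / (2 * real b) * (\<Sum>k = 1..n. (norm (h k))\<^sup>2)"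
proof -
  define H where "H = (\<Sum>k = 1..n. (norm (h k))\<^sup>2)"
  have "(\<Sum>i<m. (norm (\<Sum>l = 1 .. i * b. momentum_weight B beta b i l *\<^sub>R h (p l)))\<^sup>2 / (1 - B * beta ^ i))
      \<le> (\<Sum>i<m. real i / real b * H)"
  proof (rule sum_mono)
    fix i
    assume "i \<in> {..<m}"
    then have "i * b \<le> n"
      using assms(2) by (meson lessThan_iff less_imp_le_nat mult_le_mono1 order_trans)
    then have "{1 .. i * b} \<subseteq> {1..n}"
      by auto
    then show "(norm (\<Sum>l = 1 .. i * b. momentum_weight B beta b i l *\<^sub>R h (p l)))\<^sup>2 / (1 - B * beta ^ i)
        \<le> real i / real b * H"
      unfolding H_def using assms
      by (intro momentum_noise_div_le norm_weighted_sum_permuted_sq_le) (auto simp: sum_nonneg)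
  qed
  also have "\<dots> = (\<Sum>i<m. real i) * (H / real b)"
    unfolding sum_distrib_right by (rule sum.cong) simp_all
  also have "\<dots> \<le> (real m)\<^sup>2 / 2 * (H / real b)"
    by (intro mult_right_mono sum_of_nat_lessThan_le) (simp add: H_def sum_nonneg)
  finally show ?thesis
    by (simp add: H_def)
qed

lemma expectation_momentum_noise_sum_le:
  fixes h :: "nat \<Rightarrow> 'a::real_inner"
  assumes "0 < b" "m * b \<le> n" "0 < n" "0 \<le> B" "B \<le> 1" "0 \<le> beta" "beta < 1"
    and centred: "(\<Sum>k = 1..n. h k) = 0"
  defines "M \<equiv> pmf_of_set {p. p permutes {1..n}}"
  shows "(\<Sum>i<m. measure_pmf.expectation M
        (\<lambda>p. (norm (\<Sum>l = 1 .. i * b. momentum_weight B beta b i l *\<^sub>R h (p l)))\<^sup>2 / (1 - B * beta ^ i)))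
      \<le> (real m)\<^sup>2 / (2 * real b) * ((\<Sum>k = 1..n. (norm (h k))\<^sup>2) / real n)"
proof -
  define H where "H = (\<Sum>k = 1..n. (norm (h k))\<^sup>2) / real n"
  have "(\<Sum>i<m. measure_pmf.expectation M
        (\<lambda>p. (norm (\<Sum>l = 1 .. i * b. momentum_weight B beta b i l *\<^sub>R h (p l)))\<^sup>2 / (1 - B * beta ^ i)))
      \<le> (\<Sum>i<m. real i / real b * H)"
  proof (rule sum_mono)
    fix i
    assume "i \<in> {..<m}"
    then have "i * b \<le> n"
      using assms(2) by (meson lessThan_iff less_imp_le_nat mult_le_mono1 order_trans)
    then have "{1 .. i * b} \<subseteq> {1..n}"
      by auto
    then have "measure_pmf.expectation M (\<lambda>p. (norm (\<Sum>l = 1 .. i * b. momentum_weight B beta b i l *\<^sub>R h (p l)))\<^sup>2)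
        \<le> (\<Sum>l = 1 .. i * b. (momentum_weight B beta b i l)\<^sup>2) * ((\<Sum>k = 1..n. (norm (h k))\<^sup>2) / real (card {1..n}))"
      unfolding M_def using assms momentum_weight_bounds(1)[OF assms(1,4,5,6)]
      by (intro expectation_norm_weighted_sum_permuted_sq_le) auto
    then show "measure_pmf.expectation M
        (\<lambda>p. (norm (\<Sum>l = 1 .. i * b. momentum_weight B beta b i l *\<^sub>R h (p l)))\<^sup>2 / (1 - B * beta ^ i))
        \<le> real i / real b * H"
      unfolding integral_divide_zero H_def using assms
      by (intro momentum_noise_div_le) (auto simp: sum_nonneg)
  qed
  also have "\<dots> = (\<Sum>i<m. real i) * (H / real b)"
    unfolding sum_distrib_right by (rule sum.cong) simp_all
  also have "\<dots> \<le> (real m)\<^sup>2 / 2 * (H / real b)"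
    by (intro mult_right_mono sum_of_nat_lessThan_le) (simp add: H_def sum_nonneg)
  finally show ?thesis
    by (simp add: H_def mult_ac)
qed

lemma rrm_step_size_sq_le:
  assumes "0 < al" "al \<le> (1 - beta) / (sqrt 8 * L * real m)" "beta < 1" "0 < L" "0 < m"
  shows "(al / (1 - beta))\<^sup>2 * (real m)\<^sup>2 * L\<^sup>2 \<le> 1 / 8"
proof -
  have "al / (1 - beta) * (L * real m) \<le> 1 / sqrt 8"
    using assms by (simp add: field_simps)
  then have "(al / (1 - beta) * (L * real m))\<^sup>2 \<le> (1 / sqrt 8)\<^sup>2"
    using assms by (intro power_mono) auto
  then show ?thesis
    by (simp add: power_mult_distrib power_divide mult_ac)
qed

lemma absorbed_bound_le_five_quarters:
  fixes X Y \<kappa> :: real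
  assumes "(1 - 3 / 2 * \<kappa>) * X \<le> Y" "\<kappa> \<le> 1 / 8" "0 \<le> Y"
  shows "X \<le> 5 / 4 * Y"
proof (cases "X \<le> 0")
  case False
  then have "13 / 16 * X \<le> (1 - 3 / 2 * \<kappa>) * X"
    using assms by (intro mult_right_mono) auto
  then show ?thesis
    using assms by linarith
qed (use assms in linarith)

lemma rrm_epoch_dist_bound:
  fixes fs :: "nat \<Rightarrow> 'a::real_inner \<Rightarrow> real" and g :: "nat \<Rightarrow> 'a \<Rightarrow> 'a" and p :: "nat \<Rightarrow> nat"
    and xt x :: 'a and n b m :: nat and L fbar al :: real
  assumes n: "n = m * b" "0 < n"
    and deriv: "\<And>i y. i \<in> {1..n} \<Longrightarrow> (fs i has_derivative (\<lambda>h. g i y \<bullet> h)) (at y)"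
    and lip: "\<And>i y w. i \<in> {1..n} \<Longrightarrow> norm (g i y - g i w) \<le> L * norm (y - w)"
    and lower: "\<And>i y. i \<in> {1..n} \<Longrightarrow> fbar \<le> fs i y" and "0 < L"
    and params: "0 \<le> beta" "beta < 1" "0 \<le> lam" "lam \<le> beta / (1 - beta)"
    and step: "0 < al" "al \<le> (1 - beta) / (sqrt 8 * L * real m)"
    and perm: "p permutes {1..n}"
  defines "z \<equiv> rrm_z beta xt x"
    and "gradf \<equiv> (1 / real n) *\<^sub>R (\<Sum>i = 1..n. g i (rrm_z beta xt x))"
    and "gap \<equiv> (1 / real n) * (\<Sum>i = 1..n. fs i (rrm_z beta xt x)) - fbar"
  shows "(\<Sum>t = 1..m. (norm (rrm_yhat g b al beta lam p xt x t - z))\<^sup>2)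
      \<le> 5 * real m / 4 * (rrm_B beta lam * (norm (z - x))\<^sup>2 + (real m)\<^sup>2 * al\<^sup>2 / (1 - beta)\<^sup>2 * (norm gradf)\<^sup>2
          + 3 * L * (real m)\<^sup>2 * al\<^sup>2 / (1 - beta)\<^sup>2 * gap)"
proof -
  define B where "B = rrm_B beta lam"
  define \<tau> where "\<tau> = al / (1 - beta)"
  define Xi where "Xi i = (norm (\<Sum>l = 1 .. i * b. momentum_weight B beta b i l *\<^sub>R (g (p l) z - gradf)))\<^sup>2
      / (1 - B * beta ^ i)" for i
  have "0 < b" "0 < m"
    using n by auto
  have B: "0 \<le> B" "B \<le> 1"
    unfolding B_def using rrm_B_bounds[OF params] by auto
  have H: "(\<Sum>k = 1..n. (norm (g k z - gradf))\<^sup>2) \<le> 2 * L * real n * gap" and "0 \<le> gap"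
    using sum_norm_sq_gradient_deviation_le_gap[OF \<open>0 < n\<close> deriv lip lower \<open>0 < L\<close>]
    unfolding gradf_def gap_def z_def by auto
  have "(\<Sum>i<m. Xi i) \<le> (real m)\<^sup>2 / (2 * real b) * (\<Sum>k = 1..n. (norm (g k z - gradf))\<^sup>2)"
    unfolding Xi_def using n \<open>0 < b\<close> B params perm by (intro momentum_noise_sum_le) auto
  also have "\<dots> \<le> (real m)\<^sup>2 / (2 * real b) * (2 * L * real n * gap)"
    using H by (intro mult_left_mono) auto
  finally have noise: "3 * \<tau>\<^sup>2 * (\<Sum>i<m. Xi i) \<le> 3 * \<tau>\<^sup>2 * (L * real m ^ 3 * gap)"
    using n \<open>0 < b\<close> by (intro mult_left_mono) (auto simp: power2_eq_square power3_eq_cube field_simps)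
  have "p l \<in> {1..n}" if "l \<in> {1 .. m * b}" for l
    using that n permutes_in_image[OF perm] by simp
  then have "(1 - 3 / 2 * (\<tau>\<^sup>2 * (real m)\<^sup>2 * L\<^sup>2)) * (\<Sum>t = 1..m. (norm (rrm_yhat g b al beta lam p xt x t - z))\<^sup>2)
      \<le> real m * (B * (norm (x - z))\<^sup>2) + \<tau>\<^sup>2 * real m ^ 3 * (norm gradf)\<^sup>2 + 3 * \<tau>\<^sup>2 * (\<Sum>i<m. Xi i)"
    unfolding Xi_def z_def B_def \<tau>_def
    by (intro rrm_epoch_dist_sum_le[OF \<open>0 < b\<close> _ params] lip) (use step in auto)
  then have "(\<Sum>t = 1..m. (norm (rrm_yhat g b al beta lam p xt x t - z))\<^sup>2)
      \<le> 5 / 4 * (real m * (B * (norm (x - z))\<^sup>2) + \<tau>\<^sup>2 * real m ^ 3 * (norm gradf)\<^sup>2 + 3 * \<tau>\<^sup>2 * (L * real m ^ 3 * gap))"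
    using noise rrm_step_size_sq_le[OF step params(2) \<open>0 < L\<close> \<open>0 < m\<close>] B \<open>0 \<le> gap\<close> \<open>0 < L\<close>
    unfolding \<tau>_def by (intro absorbed_bound_le_five_quarters) auto
  also have "\<dots> = 5 * real m / 4 * (B * (norm (z - x))\<^sup>2 + (real m)\<^sup>2 * al\<^sup>2 / (1 - beta)\<^sup>2 * (norm gradf)\<^sup>2
      + 3 * L * (real m)\<^sup>2 * al\<^sup>2 / (1 - beta)\<^sup>2 * gap)"
    unfolding \<tau>_def by (simp add: norm_minus_commute power_divide power2_eq_square power3_eq_cube field_simps)
  finally show ?thesis
    unfolding B_def .
qed

lemma rrm_epoch_expected_dist_bound:
  fixes fs :: "nat \<Rightarrow> 'a::real_inner \<Rightarrow> real" and g :: "nat \<Rightarrow> 'a \<Rightarrow> 'a"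
    and xt x :: 'a and n b m :: nat and L fbar al :: real
  assumes n: "n = m * b" "0 < n"
    and deriv: "\<And>i y. i \<in> {1..n} \<Longrightarrow> (fs i has_derivative (\<lambda>h. g i y \<bullet> h)) (at y)"
    and lip: "\<And>i y w. i \<in> {1..n} \<Longrightarrow> norm (g i y - g i w) \<le> L * norm (y - w)"
    and lower: "\<And>i y. i \<in> {1..n} \<Longrightarrow> fbar \<le> fs i y" and "0 < L"
    and params: "0 \<le> beta" "beta < 1" "0 \<le> lam" "lam \<le> beta / (1 - beta)"
    and step: "0 < al" "al \<le> (1 - beta) / (sqrt 8 * L * real m)"
  defines "z \<equiv> rrm_z beta xt x"
    and "gradf \<equiv> (1 / real n) *\<^sub>R (\<Sum>i = 1..n. g i (rrm_z beta xt x))"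
    and "gap \<equiv> (1 / real n) * (\<Sum>i = 1..n. fs i (rrm_z beta xt x)) - fbar"
    and "M \<equiv> pmf_of_set {p. p permutes {1..n}}"
  shows "(\<Sum>t = 1..m. measure_pmf.expectation M (\<lambda>p. (norm (rrm_yhat g b al beta lam p xt x t - z))\<^sup>2))
      \<le> 5 * real m / 4 * (rrm_B beta lam * (norm (z - x))\<^sup>2 + (real m)\<^sup>2 * al\<^sup>2 / (1 - beta)\<^sup>2 * (norm gradf)\<^sup>2
          + 3 * L * real m * al\<^sup>2 / (real b * (1 - beta)\<^sup>2) * gap)"
proof -
  define B where "B = rrm_B beta lam"
  define \<tau> where "\<tau> = al / (1 - beta)"
  define \<kappa> where "\<kappa> = \<tau>\<^sup>2 * (real m)\<^sup>2 * L\<^sup>2"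
  define Xi where "Xi i p = (norm (\<Sum>l = 1 .. i * b. momentum_weight B beta b i l *\<^sub>R (g (p l) z - gradf)))\<^sup>2
      / (1 - B * beta ^ i)" for i p
  define Y where "Y = real m * (B * (norm (x - z))\<^sup>2) + \<tau>\<^sup>2 * real m ^ 3 * (norm gradf)\<^sup>2"
  have "0 < b" "0 < m"
    using n by auto
  have B: "0 \<le> B" "B \<le> 1"
    unfolding B_def using rrm_B_bounds[OF params] by auto
  have H: "(\<Sum>k = 1..n. (norm (g k z - gradf))\<^sup>2) \<le> 2 * L * real n * gap" and "0 \<le> gap"
    using sum_norm_sq_gradient_deviation_le_gap[OF \<open>0 < n\<close> deriv lip lower \<open>0 < L\<close>]
    unfolding gradf_def gap_def z_def by auto
  have "(\<Sum>k = 1..n. g k z - gradf) = 0"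
    using \<open>0 < n\<close> by (simp add: gradf_def z_def sum_subtractf sum_constant_scaleR)
  then have "(\<Sum>i<m. measure_pmf.expectation M (Xi i))
      \<le> (real m)\<^sup>2 / (2 * real b) * ((\<Sum>k = 1..n. (norm (g k z - gradf))\<^sup>2) / real n)"
    unfolding Xi_def M_def using n \<open>0 < b\<close> B params by (intro expectation_momentum_noise_sum_le) auto
  also have "\<dots> \<le> (real m)\<^sup>2 / (2 * real b) * (2 * L * gap)"
    using H \<open>0 < n\<close> by (intro mult_left_mono) (auto simp: field_simps)
  finally have noise: "3 * \<tau>\<^sup>2 * (\<Sum>i<m. measure_pmf.expectation M (Xi i)) \<le> 3 * \<tau>\<^sup>2 * (L * (real m)\<^sup>2 * gap / real b)"
    by (intro mult_left_mono) (auto simp: field_simps)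
  have set_M: "set_pmf M = {p. p permutes {1..n}}"
    unfolding M_def by (simp add: set_pmf_of_permutations)
  have int: "integrable (measure_pmf M) f" for f :: "(nat \<Rightarrow> nat) \<Rightarrow> real"
    unfolding M_def by (simp add: integrable_pmf_of_permutations)
  have pointwise: "(1 - 3 / 2 * \<kappa>) * (\<Sum>t = 1..m. (norm (rrm_yhat g b al beta lam p xt x t - z))\<^sup>2)
      \<le> Y + 3 * \<tau>\<^sup>2 * (\<Sum>i<m. Xi i p)" if "p \<in> set_pmf M" for p
  proof -
    have "p l \<in> {1..n}" if "l \<in> {1 .. m * b}" for l
      using that n permutes_in_image[of p "{1..n}"] \<open>p \<in> set_pmf M\<close> by (simp add: set_M)
    then show ?thesis
      unfolding Xi_def Y_def z_def B_def \<tau>_def \<kappa>_def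
      by (intro rrm_epoch_dist_sum_le[OF \<open>0 < b\<close> _ params] lip) (use step in auto)
  qed
  have "(1 - 3 / 2 * \<kappa>) * (\<Sum>t = 1..m. measure_pmf.expectation M (\<lambda>p. (norm (rrm_yhat g b al beta lam p xt x t - z))\<^sup>2))
      = measure_pmf.expectation M (\<lambda>p. (1 - 3 / 2 * \<kappa>) * (\<Sum>t = 1..m. (norm (rrm_yhat g b al beta lam p xt x t - z))\<^sup>2))"
    by (simp add: int integral_sum)
  also have "\<dots> \<le> measure_pmf.expectation M (\<lambda>p. Y + 3 * \<tau>\<^sup>2 * (\<Sum>i<m. Xi i p))"
    using pointwise by (intro integral_mono_AE int) (simp add: AE_measure_pmf_iff)
  also have "\<dots> \<le> Y + 3 * \<tau>\<^sup>2 * (L * (real m)\<^sup>2 * gap / real b)"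
    using noise by (simp add: int integral_sum)
  finally have "(\<Sum>t = 1..m. measure_pmf.expectation M (\<lambda>p. (norm (rrm_yhat g b al beta lam p xt x t - z))\<^sup>2))
      \<le> 5 / 4 * (Y + 3 * \<tau>\<^sup>2 * (L * (real m)\<^sup>2 * gap / real b))"
    using rrm_step_size_sq_le[OF step params(2) \<open>0 < L\<close> \<open>0 < m\<close>] B \<open>0 \<le> gap\<close> \<open>0 < L\<close>
    unfolding \<kappa>_def \<tau>_def Y_def by (intro absorbed_bound_le_five_quarters) auto
  also have "\<dots> = 5 * real m / 4 * (B * (norm (z - x))\<^sup>2 + (real m)\<^sup>2 * al\<^sup>2 / (1 - beta)\<^sup>2 * (norm gradf)\<^sup>2
      + 3 * L * real m * al\<^sup>2 / (real b * (1 - beta)\<^sup>2) * gap)"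
    unfolding \<tau>_def Y_def by (simp add: norm_minus_commute power_divide power2_eq_square power3_eq_cube field_simps)
  finally show ?thesis
    unfolding B_def .
qed

theorem lemmaB3:
  fixes fs :: "nat \<Rightarrow> 'a::euclidean_space \<Rightarrow> real"
    and g :: "nat \<Rightarrow> 'a \<Rightarrow> 'a"
    and n b :: nat
    and L fbar beta lam :: real
    and al :: "nat \<Rightarrow> real"
    and ps :: "nat \<Rightarrow> nat \<Rightarrow> nat"
    and x1 :: 'a
  defines "m \<equiv> n div b"
      and "f \<equiv> (\<lambda>x. (1 / real n) * (\<Sum>i = 1..n. fs i x))"
      and "gradf \<equiv> (\<lambda>x. (1 / real n) *\<^sub>R (\<Sum>i = 1..n. g i x))"
      and "xt \<equiv> (\<lambda>k. fst (rrm_state g b (n div b) al beta lam ps x1 k))"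
      and "x \<equiv> (\<lambda>k. snd (rrm_state g b (n div b) al beta lam ps x1 k))"
      and "z \<equiv> (\<lambda>k. rrm_z beta (fst (rrm_state g b (n div b) al beta lam ps x1 k))
                                  (snd (rrm_state g b (n div b) al beta lam ps x1 k)))"
  assumes n_pos: "0 < n" and b_pos: "0 < b" and b_dvd: "b dvd n"
    and deriv: "\<And>i y. i \<in> {1..n} \<Longrightarrow> (fs i has_derivative (\<lambda>h. g i y \<bullet> h)) (at y)"
    and cont: "\<And>i. i \<in> {1..n} \<Longrightarrow> continuous_on UNIV (g i)"
    and L_pos: "0 < L"
    and lip: "\<And>i y w. i \<in> {1..n} \<Longrightarrow> norm (g i y - g i w) \<le> L * norm (y - w)"
    and lower: "\<And>i y. i \<in> {1..n} \<Longrightarrow> fbar \<le> fs i y"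
    and beta: "0 \<le> beta" "beta < 1"
    and lam: "0 \<le> lam" "lam \<le> beta / (1 - beta)"
    and step: "\<And>k. 1 \<le> k \<Longrightarrow> 0 < al k \<and> al k \<le> (1 - beta) / (sqrt 8 * L * real m)"
    and perms: "\<And>k. 1 \<le> k \<Longrightarrow> ps k permutes {1..n}"
  shows
    "(\<forall>k\<ge>1.
        (\<Sum>t = 1..m. (norm (rrm_yhat g b (al k) beta lam (ps k) (xt k) (x k) t - z k))\<^sup>2)
        \<le> 5 * real m / 4 *
           (rrm_B beta lam * (norm (z k - x k))\<^sup>2
            + (real m)\<^sup>2 * (al k)\<^sup>2 / (1 - beta)\<^sup>2 * (norm (gradf (z k)))\<^sup>2
            + 3 * L * (real m)\<^sup>2 * (al k)\<^sup>2 / (1 - beta)\<^sup>2 * (f (z k) - fbar)))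
     \<and>
     (\<forall>k\<ge>1.
        (\<Sum>t = 1..m. measure_pmf.expectation (pmf_of_set {p. p permutes {1..n}})
            (\<lambda>p. (norm (rrm_yhat g b (al k) beta lam p (xt k) (x k) t - z k))\<^sup>2))
        \<le> 5 * real m / 4 *
           (rrm_B beta lam * (norm (z k - x k))\<^sup>2
            + (real m)\<^sup>2 * (al k)\<^sup>2 / (1 - beta)\<^sup>2 * (norm (gradf (z k)))\<^sup>2
            + 3 * L * real m * (al k)\<^sup>2 / (real b * (1 - beta)\<^sup>2) * (f (z k) - fbar)))"
proof -
  have n_eq: "n = n div b * b"
    using b_dvd by simp
  show ?thesis
    unfolding m_def f_def gradf_def xt_def x_def z_def
    by (intro conjI allI impI rrm_epoch_dist_bound[OF n_eq n_pos deriv lip lower L_pos beta lam]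
        rrm_epoch_expected_dist_bound[OF n_eq n_pos deriv lip lower L_pos beta lam])
      (use step perms in \<open>auto simp: m_def\<close>)
qed

end
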